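(* In the two-firm setting below, fix $t<T$ and current asset values $a_1=a_{1,t}>0$, $a_2=a_{2,t}>0$. Assume: - the asset correlation satisfies $\rho\in(-1,1)$; - the current equity prices satisfy $s_1,s_2>0$; - the equity Deltas satisfy $\Delta_{11},\Delta_{22}>0$ and $\Delta_{12},\Delta_{21}\ge 0$. Then the instantaneous equity correlation satisfies $\rho^s\ge\rho$.
   Context: Two-firm network model ($n=2$). Cross-holdings. $M^s_{12},M^s_{21},M^d_{12},M^d_{21}\in[0,1)$ are equity/debt cross-holding fractions: firm $i$ holds fraction $M^s_{ij}$ of firm $j$'s equity and fraction $M^d_{ij}$ of firm $j$'s debt. Diagonal entries are zero. Nominal debts are $d_1,d_2>0$. Payoffs at maturity. For terminal external asset values $\mathbf{a}_T\in(0,\infty)^2$, the terminal equity and debt values $\mathbf{x}^*(\mathbf{a}_T)=(s_1^*,s_2^*,r_1^*,r_2^* )$ are the unique solution of $$s_i=\max\Big\{0,\;a_{i,T}+\sum_j M^s_{ij}s_j+\sum_j M^d_{ij}r_j-d_i\Big\},$$ $$r_i=\min\Big\{d_i,\;a_{i,T}+\sum_j M^s_{ij}s_j+\sum_j M^d_{ij}r_j\Big\}.$$ Asset dynamics. Under the risk-neutral measure $Q$ the external assets follow the correlated geometric Brownian motion $$dA_{i,t}=rA_{i,t}\,dt+\sigma_iA_{i,t}\,dW_{i,t},$$ with interest rate $r$, volatilities $\sigma_1,\sigma_2>0$, and $d\langle W_1,W_2\rangle_t=\rho\,dt$. Prices and Deltas. With $\tau=T-t$, the time-$t$ equity prices are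 $$s_i=s_{i,t}=\mathbb{E}^Q_t\big[e^{-r\tau}s_i^*(\mathbf{A}_T)\big]$$ as functions of the current asset values $a_1,a_2$. The equity Deltas are $\Delta_{ij}=\partial s_{i,t}/\partial a_{j,t}$; write $\boldsymbol{\Delta}=(\Delta_{ij})$. Equity correlation. Let $\boldsymbol{\Sigma}=\begin{pmatrix}\sigma_1^2&\rho\sigma_1\sigma_2\\ \rho\sigma_1\sigma_2&\sigma_2^2\end{pmatrix}$ be the asset covariance matrix. The instantaneous equity covariance matrix is $$\boldsymbol{\Sigma}^s=\operatorname{diag}(s_1,s_2)^{-1}\,\boldsymbol{\Delta}\,\operatorname{diag}(a_1,a_2)\,\boldsymbol{\Sigma}\,\operatorname{diag}(a_1,a_2)\,\boldsymbol{\Delta}^T\operatorname{diag}(s_1,s_2)^{-1},$$ and the equity correlation is $\rho^s=\Sigma^s_{12}/\sqrt{\Sigma^s_{11}\Sigma^s_{22}}$. *)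

theory Defs
  imports "HOL-Probability.Probability"
begin

(* Firms are indexed by 1 and 2.  Vectors are nat-indexed functions; matrices
   are nat => nat => real, only entries with indices in {1,2} are relevant. *)

(* Clearing (fixed-point) equations at maturity.  Equity s and debt r values are
   required to vanish outside the index set {1,2}, so that the solution is a
   unique object when it is unique on {1,2}. *)
definition clearing ::
  "(nat \<Rightarrow> nat \<Rightarrow> real) \<Rightarrow> (nat \<Rightarrow> nat \<Rightarrow> real) \<Rightarrow> (nat \<Rightarrow> real) \<Rightarrow>
   (nat \<Rightarrow> real) \<Rightarrow> (nat \<Rightarrow> real) \<Rightarrow> (nat \<Rightarrow> real) \<Rightarrow> bool" where
  "clearing Ms Md d aT s r \<longleftrightarrow>
     (\<forall>i\<in>{1,2}.
        s i = max 0 (aT i + (\<Sum>j\<in>{1,2}. Ms i j * s j) + (\<Sum>j\<in>{1,2}. Md i j * r j) - d i)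
      \<and> r i = min (d i) (aT i + (\<Sum>j\<in>{1,2}. Ms i j * s j) + (\<Sum>j\<in>{1,2}. Md i j * r j)))
   \<and> (\<forall>i. i \<notin> {1,2} \<longrightarrow> s i = 0 \<and> r i = 0)"

definition terminal_equity ::
  "(nat \<Rightarrow> nat \<Rightarrow> real) \<Rightarrow> (nat \<Rightarrow> nat \<Rightarrow> real) \<Rightarrow> (nat \<Rightarrow> real) \<Rightarrow>
   (nat \<Rightarrow> real) \<Rightarrow> nat \<Rightarrow> real" where
  "terminal_equity Ms Md d aT = fst (THE (s, r). clearing Ms Md d aT s r)"

(* Terminal asset values A_T of the correlated GBM started at A_t = a, after time tau,
   written in terms of two independent standard normal variables (z1, z2):
   W_1 increment ~ sqrt tau * z1, W_2 increment ~ sqrt tau * (rho z1 + sqrt(1-rho^2) z2). *)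
definition terminal_assets ::
  "real \<Rightarrow> (nat \<Rightarrow> real) \<Rightarrow> real \<Rightarrow> real \<Rightarrow> (nat \<Rightarrow> real) \<Rightarrow> real \<times> real \<Rightarrow> nat \<Rightarrow> real" where
  "terminal_assets rf \<sigma> \<rho> \<tau> a z i =
     (if i = 1 then a 1 * exp ((rf - (\<sigma> 1)\<^sup>2 / 2) * \<tau> + \<sigma> 1 * sqrt \<tau> * fst z)
      else if i = 2 then a 2 * exp ((rf - (\<sigma> 2)\<^sup>2 / 2) * \<tau>
                 + \<sigma> 2 * sqrt \<tau> * (\<rho> * fst z + sqrt (1 - \<rho>\<^sup>2) * snd z))
      else 0)"

definition equity_price ::
  "(nat \<Rightarrow> nat \<Rightarrow> real) \<Rightarrow> (nat \<Rightarrow> nat \<Rightarrow> real) \<Rightarrow> (nat \<Rightarrow> real) \<Rightarrow>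
   real \<Rightarrow> (nat \<Rightarrow> real) \<Rightarrow> real \<Rightarrow> real \<Rightarrow> nat \<Rightarrow> (nat \<Rightarrow> real) \<Rightarrow> real" where
  "equity_price Ms Md d rf \<sigma> \<rho> \<tau> i a =
     exp (- rf * \<tau>) *
     (\<integral>z. std_normal_density (fst z) * std_normal_density (snd z) *
            terminal_equity Ms Md d (terminal_assets rf \<sigma> \<rho> \<tau> a z) i
      \<partial>(lborel :: (real \<times> real) measure))"

definition asset_cov :: "(nat \<Rightarrow> real) \<Rightarrow> real \<Rightarrow> nat \<Rightarrow> nat \<Rightarrow> real" where
  "asset_cov \<sigma> \<rho> k l = (if k = l then (\<sigma> k)\<^sup>2 else \<rho> * \<sigma> k * \<sigma> l)"

(* Sigma^s = diag(s)^{-1} Delta diag(a) Sigma diag(a) Delta^T diag(s)^{-1}, entrywise *)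
definition equity_cov ::
  "(nat \<Rightarrow> real) \<Rightarrow> real \<Rightarrow> (nat \<Rightarrow> real) \<Rightarrow> (nat \<Rightarrow> real) \<Rightarrow> (nat \<Rightarrow> nat \<Rightarrow> real)
   \<Rightarrow> nat \<Rightarrow> nat \<Rightarrow> real" where
  "equity_cov \<sigma> \<rho> a s \<Delta> i j =
     (1 / s i) * (\<Sum>k\<in>{1,2}. \<Sum>l\<in>{1,2}. \<Delta> i k * a k * asset_cov \<sigma> \<rho> k l * a l * \<Delta> j l)
     * (1 / s j)"

definition equity_corr ::
  "(nat \<Rightarrow> real) \<Rightarrow> real \<Rightarrow> (nat \<Rightarrow> real) \<Rightarrow> (nat \<Rightarrow> real) \<Rightarrow> (nat \<Rightarrow> nat \<Rightarrow> real) \<Rightarrow> real" where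
  "equity_corr \<sigma> \<rho> a s \<Delta> =
     equity_cov \<sigma> \<rho> a s \<Delta> 1 2 /
       sqrt (equity_cov \<sigma> \<rho> a s \<Delta> 1 1 * equity_cov \<sigma> \<rho> a s \<Delta> 2 2)"

end

theory Submission
  imports Defs
begin

text \<open>Scaling row \<open>i\<close> of \<open>\<Delta>\<close> by \<open>a\<^sub>k \<sigma>\<^sub>k\<close> turns \<open>\<Sigma>\<^sup>s\<close> into the Gram matrix of these rows for the
  bilinear form with matrix \<open>[[1,\<rho>],[\<rho>,1]]\<close>, so \<open>\<rho>\<^sup>s\<close> is the cosine of the angle between the two
  rows. In that geometry the basis vectors make the angle \<open>arccos \<rho>\<close>, and two vectors of the
  closed positive quadrant enclose at most this angle; hence \<open>\<rho>\<^sup>s \<ge> \<rho>\<close>. Algebraically this is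
  the Lagrange identity \<open>\<langle>x,x\<rangle>\<langle>y,y\<rangle> = \<langle>x,y\<rangle>\<^sup>2 + (1 - \<rho>\<^sup>2) det(x,y)\<^sup>2\<close> together with the bound
  \<open>\<rho> |det(x,y)| \<le> \<langle>x,y\<rangle>\<close> on the quadrant, which is AM-GM.
  Only the signs of \<open>\<Delta>\<close> and \<open>s\<close> enter.\<close>

definition corr_form :: "real \<Rightarrow> real \<times> real \<Rightarrow> real \<times> real \<Rightarrow> real" where
  "corr_form \<rho> x y = fst x * fst y + \<rho> * (fst x * snd y + snd x * fst y) + snd x * snd y"

definition det2 :: "real \<times> real \<Rightarrow> real \<times> real \<Rightarrow> real" where
  "det2 x y = fst x * snd y - snd x * fst y"

lemma corr_form_Lagrange_identity:
  "corr_form \<rho> x x * corr_form \<rho> y y = (corr_form \<rho> x y)\<^sup>2 + (1 - \<rho>\<^sup>2) * (det2 x y)\<^sup>2"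
  unfolding corr_form_def det2_def by (simp add: power2_eq_square algebra_simps)

lemma corr_form_pos:
  assumes "\<bar>\<rho>\<bar> < 1" "x \<noteq> 0"
  shows "corr_form \<rho> x x > 0"
proof -
  obtain p q where x: "x = (p, q)" by fastforce
  have rho2: "1 - \<rho>\<^sup>2 > 0" using assms(1) by (simp add: abs_square_less_1)
  have split: "corr_form \<rho> x x = (p + \<rho> * q)\<^sup>2 + (1 - \<rho>\<^sup>2) * q\<^sup>2"
    unfolding x corr_form_def by (simp add: power2_eq_square algebra_simps)
  show ?thesis
  proof (cases "q = 0")
    case True
    then have "p \<noteq> 0" using assms(2) x by (simp add: zero_prod_def)
    then show ?thesis using True split by simp
  next
    case False
    then show ?thesis using split rho2 by (simp add: add_nonneg_pos)
  qed
qed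

lemma corr_form_ge_abs_det2:
  assumes x: "fst x \<ge> 0" "snd x \<ge> 0" and y: "fst y \<ge> 0" "snd y \<ge> 0" and "\<rho> \<ge> -1"
  shows "\<rho> * \<bar>det2 x y\<bar> \<le> corr_form \<rho> x y"
proof -
  obtain p q m n where xy: "x = (p, q)" "y = (m, n)" by fastforce
  define w where "w = min (p * n) (q * m)"
  have nonneg: "p \<ge> 0" "q \<ge> 0" "m \<ge> 0" "n \<ge> 0" using x y xy by auto
  then have "w \<ge> 0" unfolding w_def by simp
  have gap: "corr_form \<rho> x y - \<rho> * \<bar>det2 x y\<bar> = p * m + q * n + 2 * (\<rho> * w)"
    unfolding xy corr_form_def det2_def w_def by (simp add: min_def abs_if algebra_simps)
  \<comment> \<open>\<open>w\<^sup>2 \<le> (pn)(qm) = (pm)(qn)\<close>, so AM-GM bounds \<open>2w\<close> by \<open>pm + qn\<close>.\<close>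
  have "w \<le> p * n" "w \<le> q * m" unfolding w_def by simp_all
  then have "w * w \<le> (p * n) * (q * m)" using \<open>w \<ge> 0\<close> by (intro mult_mono) simp_all
  then have "(2 * w)\<^sup>2 \<le> 4 * ((p * m) * (q * n))" by (simp add: power2_eq_square ac_simps)
  also have "\<dots> \<le> 4 * ((p * m) * (q * n)) + (p * m - q * n)\<^sup>2" by simp
  also have "\<dots> = (p * m + q * n)\<^sup>2" by (simp add: power2_eq_square algebra_simps)
  finally have "2 * w \<le> p * m + q * n" by (rule power2_le_imp_le) (use nonneg in simp)
  moreover have "0 \<le> (\<rho> + 1) * w" using \<open>\<rho> \<ge> -1\<close> \<open>w \<ge> 0\<close> by simp
  then have "0 \<le> \<rho> * w + w" by (simp add: algebra_simps)
  ultimately show ?thesis using gap by linarith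
qed

lemma mult_sqrt_Lagrange_le:
  fixes A Z \<rho> :: real
  assumes "\<rho>\<^sup>2 \<le> 1" "\<rho> * \<bar>Z\<bar> \<le> A"
  shows "\<rho> * sqrt (A\<^sup>2 + (1 - \<rho>\<^sup>2) * Z\<^sup>2) \<le> A"
proof -
  define B where "B = A\<^sup>2 + (1 - \<rho>\<^sup>2) * Z\<^sup>2"
  have "B \<ge> 0" unfolding B_def using assms(1) by simp
  have "1 - \<rho>\<^sup>2 \<ge> 0" using assms(1) by simp
  have gap: "\<rho>\<^sup>2 * B - A\<^sup>2 = (1 - \<rho>\<^sup>2) * ((\<rho> * \<bar>Z\<bar>)\<^sup>2 - A\<^sup>2)"
    unfolding B_def by (simp add: power_mult_distrib algebra_simps)
  have sqrt_rho2B: "sqrt (\<rho>\<^sup>2 * B) = \<bar>\<rho>\<bar> * sqrt B" by (simp add: real_sqrt_mult)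
  show ?thesis
  proof (cases "\<rho> \<ge> 0")
    case True
    then have "A \<ge> 0" using assms(2) by (meson abs_ge_zero mult_nonneg_nonneg order_trans)
    have "(\<rho> * \<bar>Z\<bar>)\<^sup>2 \<le> A\<^sup>2" using True assms(2) by (intro power_mono) simp_all
    then have "(1 - \<rho>\<^sup>2) * ((\<rho> * \<bar>Z\<bar>)\<^sup>2 - A\<^sup>2) \<le> 0"
      using \<open>1 - \<rho>\<^sup>2 \<ge> 0\<close> by (intro mult_nonneg_nonpos) simp_all
    then have "\<rho>\<^sup>2 * B \<le> A\<^sup>2" using gap by linarith
    then have "sqrt (\<rho>\<^sup>2 * B) \<le> \<bar>A\<bar>" using real_sqrt_le_mono real_sqrt_abs by metis
    then show ?thesis using True \<open>A \<ge> 0\<close> sqrt_rho2B unfolding B_def by simp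
  next
    case False
    show ?thesis
    proof (cases "A \<ge> 0")
      case True
      then show ?thesis using False \<open>B \<ge> 0\<close> unfolding B_def
        by (smt (verit) mult_nonpos_nonneg real_sqrt_ge_zero)
    next
      case A_neg: False
      then have "A\<^sup>2 \<le> (\<rho> * \<bar>Z\<bar>)\<^sup>2"
        using assms(2) power_mono[of "-A" "-(\<rho> * \<bar>Z\<bar>)" 2] by simp
      then have "(1 - \<rho>\<^sup>2) * ((\<rho> * \<bar>Z\<bar>)\<^sup>2 - A\<^sup>2) \<ge> 0"
        using \<open>1 - \<rho>\<^sup>2 \<ge> 0\<close> by (intro mult_nonneg_nonneg) simp_all
      then have "A\<^sup>2 \<le> \<rho>\<^sup>2 * B" using gap by linarith
      then have "\<bar>A\<bar> \<le> sqrt (\<rho>\<^sup>2 * B)" using real_sqrt_le_mono real_sqrt_abs by metis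
      then show ?thesis using False A_neg sqrt_rho2B unfolding B_def by simp
    qed
  qed
qed

lemma corr_form_cosine_ge:
  assumes x: "fst x \<ge> 0" "snd x \<ge> 0" and y: "fst y \<ge> 0" "snd y \<ge> 0" and "\<bar>\<rho>\<bar> < 1"
  shows "\<rho> * sqrt (corr_form \<rho> x x * corr_form \<rho> y y) \<le> corr_form \<rho> x y"
proof -
  have "\<rho>\<^sup>2 \<le> 1" "\<rho> \<ge> -1" using \<open>\<bar>\<rho>\<bar> < 1\<close> by (simp_all add: abs_square_le_1)
  then show ?thesis
    unfolding corr_form_Lagrange_identity
    by (intro mult_sqrt_Lagrange_le corr_form_ge_abs_det2 x y)
qed

definition scaled_delta_row ::
  "(nat \<Rightarrow> real) \<Rightarrow> (nat \<Rightarrow> real) \<Rightarrow> (nat \<Rightarrow> nat \<Rightarrow> real) \<Rightarrow> nat \<Rightarrow> real \<times> real" where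
  "scaled_delta_row \<sigma> a \<Delta> i = (\<Delta> i 1 * a 1 * \<sigma> 1, \<Delta> i 2 * a 2 * \<sigma> 2)"

lemma equity_cov_eq_corr_form:
  "equity_cov \<sigma> \<rho> a s \<Delta> i j =
     corr_form \<rho> (scaled_delta_row \<sigma> a \<Delta> i) (scaled_delta_row \<sigma> a \<Delta> j) / (s i * s j)"
proof -
  have "(\<Sum>k\<in>{1,2}. \<Sum>l\<in>{1,2}. \<Delta> i k * a k * asset_cov \<sigma> \<rho> k l * a l * \<Delta> j l)
     = corr_form \<rho> (scaled_delta_row \<sigma> a \<Delta> i) (scaled_delta_row \<sigma> a \<Delta> j)"
    unfolding asset_cov_def corr_form_def scaled_delta_row_def
    by (simp add: power2_eq_square algebra_simps)
  then show ?thesis unfolding equity_cov_def by simp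
qed

lemma equity_corr_eq_cosine:
  fixes \<sigma> a s :: "nat \<Rightarrow> real" and \<Delta> :: "nat \<Rightarrow> nat \<Rightarrow> real"
  assumes "s 1 > 0" "s 2 > 0"
  defines "x \<equiv> scaled_delta_row \<sigma> a \<Delta> 1" and "y \<equiv> scaled_delta_row \<sigma> a \<Delta> 2"
  shows "equity_corr \<sigma> \<rho> a s \<Delta> = corr_form \<rho> x y / sqrt (corr_form \<rho> x x * corr_form \<rho> y y)"
proof -
  have "sqrt (corr_form \<rho> x x / (s 1 * s 1) * (corr_form \<rho> y y / (s 2 * s 2)))
      = sqrt (corr_form \<rho> x x * corr_form \<rho> y y / (s 1 * s 2)\<^sup>2)"
    by (simp add: power2_eq_square)
  also have "\<dots> = sqrt (corr_form \<rho> x x * corr_form \<rho> y y) / (s 1 * s 2)"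
    unfolding real_sqrt_divide real_sqrt_abs using assms by simp
  finally have norms_eq: "sqrt (corr_form \<rho> x x / (s 1 * s 1) * (corr_form \<rho> y y / (s 2 * s 2)))
      = sqrt (corr_form \<rho> x x * corr_form \<rho> y y) / (s 1 * s 2)" .
  have "equity_corr \<sigma> \<rho> a s \<Delta>
      = corr_form \<rho> x y / (s 1 * s 2) / (sqrt (corr_form \<rho> x x * corr_form \<rho> y y) / (s 1 * s 2))"
    unfolding equity_corr_def equity_cov_eq_corr_form x_def[symmetric] y_def[symmetric] norms_eq ..
  also have "\<dots> = corr_form \<rho> x y / sqrt (corr_form \<rho> x x * corr_form \<rho> y y)"
    using assms by simp
  finally show ?thesis .
qed

theorem theorem1:
  fixes Ms Md :: "nat \<Rightarrow> nat \<Rightarrow> real" and d \<sigma> a s :: "nat \<Rightarrow> real"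
    and \<Delta> :: "nat \<Rightarrow> nat \<Rightarrow> real" and rf \<rho> t T :: real
  assumes Ms_range: "\<forall>i\<in>{1,2}. \<forall>j\<in>{1,2}. 0 \<le> Ms i j \<and> Ms i j < 1"
    and Md_range: "\<forall>i\<in>{1,2}. \<forall>j\<in>{1,2}. 0 \<le> Md i j \<and> Md i j < 1"
    and Ms_diag: "Ms 1 1 = 0" "Ms 2 2 = 0"
    and Md_diag: "Md 1 1 = 0" "Md 2 2 = 0"
    and d_pos: "d 1 > 0" "d 2 > 0"
    and \<sigma>_pos: "\<sigma> 1 > 0" "\<sigma> 2 > 0"
    and tT: "t < T"
    and a_pos: "a 1 > 0" "a 2 > 0"
    and \<rho>_range: "-1 < \<rho>" "\<rho> < 1"
    and s_def: "\<forall>i\<in>{1,2}. s i = equity_price Ms Md d rf \<sigma> \<rho> (T - t) i a"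
    and s_pos: "s 1 > 0" "s 2 > 0"
    and Delta: "\<forall>i\<in>{1,2}. \<forall>j\<in>{1,2}.
                  ((\<lambda>x. equity_price Ms Md d rf \<sigma> \<rho> (T - t) i (a(j := x)))
                     has_real_derivative \<Delta> i j) (at (a j))"
    and Delta_diag: "\<Delta> 1 1 > 0" "\<Delta> 2 2 > 0"
    and Delta_off: "\<Delta> 1 2 \<ge> 0" "\<Delta> 2 1 \<ge> 0"
  shows "equity_corr \<sigma> \<rho> a s \<Delta> \<ge> \<rho>"
proof -
  define x where "x = scaled_delta_row \<sigma> a \<Delta> 1"
  define y where "y = scaled_delta_row \<sigma> a \<Delta> 2"
  have "\<bar>\<rho>\<bar> < 1" using \<rho>_range by simp
  have x_quadrant: "fst x > 0" "snd x \<ge> 0" and y_quadrant: "fst y \<ge> 0" "snd y > 0"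
    unfolding x_def y_def scaled_delta_row_def
    using Delta_diag Delta_off a_pos \<sigma>_pos by simp_all
  then have "x \<noteq> 0" "y \<noteq> 0" by auto
  then have norms_pos: "sqrt (corr_form \<rho> x x * corr_form \<rho> y y) > 0"
    using corr_form_pos[OF \<open>\<bar>\<rho>\<bar> < 1\<close>] by simp
  have "equity_corr \<sigma> \<rho> a s \<Delta> = corr_form \<rho> x y / sqrt (corr_form \<rho> x x * corr_form \<rho> y y)"
    unfolding x_def y_def by (rule equity_corr_eq_cosine[OF s_pos])
  also have "\<dots> \<ge> \<rho>"
    unfolding pos_le_divide_eq[OF norms_pos]
    using x_quadrant y_quadrant by (intro corr_form_cosine_ge \<open>\<bar>\<rho>\<bar> < 1\<close>) simp_all
  finally show ?thesis .
qed

end
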